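(* Let $F_1,F_2\colon\mathbf{A}\to\mathbf{B}$ be lenses, and let $E\colon\mathbf{B}\to\mathbf{C}$ be a lens with $E\circ F_1=E\circ F_2$ such that the get functor $UE$ is a coequaliser of $UF_1$ and $UF_2$ in $\mathbf{Cat}$. Then $E$ is a coequaliser of $F_1$ and $F_2$ in $\mathbf{Lens}$ if and only if for all lenses $G\colon\mathbf{B}\to\mathbf{D}$ with $G\circ F_1=G\circ F_2$, all objects $B$ of $\mathbf{B}$ and all morphisms $d$ of $\mathbf{D}$ with domain $GB$, we have $\varphi_{G,B}(d)=\varphi_{E,B}\big(E\,\varphi_{G,B}(d)\big)$.
   Context: A lens $F\colon \mathbf{A}\to\mathbf{B}$ between small categories consists of a functor $F\colon\mathbf{A}\to\mathbf{B}$ (the get functor) together with, for each object $A$ of $\mathbf{A}$, a function $\varphi_{F,A}$ from the set of morphisms of $\mathbf{B}$ with domain $FA$ to the set of morphisms of $\mathbf{A}$ with domain $A$, such that: $F(\varphi_{F,A}b)=b$; $\varphi_{F,A}(\mathrm{id}_{FA})=\mathrm{id}_A$; and $\varphi_{F,A}(b'\circ b)=\varphi_{F,A'}(b')\circ\varphi_{F,A}(b)$ whenever $b$ has domain $FA$, $A'$ is the codomain of $\varphi_{F,A}b$, and $b'$ has domain $FA'$. $\mathbf{Lens}$ is the category of small categories and lenses, with composite of $F\colon\mathbf{A}\to\mathbf{B}$, $G\colon\mathbf{B}\to\mathbf{C}$ having get functor $G\circ F$ and puts $\varphi_{G\circ F,A}(c)=\varphi_{F,A}(\varphi_{G,FA}(c))$.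 $U\colon\mathbf{Lens}\to\mathbf{Cat}$ sends a lens to its get functor. *)

theory Defs
  imports Main
begin

text \<open>Small categories, given by explicit carrier sets of objects and morphisms.
  Cmp g f is the composite g after f (defined when Cod f = Dom g).\<close>
record ('o,'m) category =
  Obj :: "'o set"
  Arr :: "'m set"
  Dom :: "'m \<Rightarrow> 'o"
  Cod :: "'m \<Rightarrow> 'o"
  Idt :: "'o \<Rightarrow> 'm"
  Cmp :: "'m \<Rightarrow> 'm \<Rightarrow> 'm"

definition is_category :: "('o,'m) category \<Rightarrow> bool" where
  "is_category X \<longleftrightarrow>
     (\<forall>f\<in>Arr X. Dom X f \<in> Obj X \<and> Cod X f \<in> Obj X) \<and>
     (\<forall>a\<in>Obj X. Idt X a \<in> Arr X \<and> Dom X (Idt X a) = a \<and> Cod X (Idt X a) = a) \<and>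
     (\<forall>f\<in>Arr X. \<forall>g\<in>Arr X. Cod X f = Dom X g \<longrightarrow>
        Cmp X g f \<in> Arr X \<and> Dom X (Cmp X g f) = Dom X f \<and> Cod X (Cmp X g f) = Cod X g) \<and>
     (\<forall>f\<in>Arr X. Cmp X f (Idt X (Dom X f)) = f \<and> Cmp X (Idt X (Cod X f)) f = f) \<and>
     (\<forall>f\<in>Arr X. \<forall>g\<in>Arr X. \<forall>h\<in>Arr X. Cod X f = Dom X g \<longrightarrow> Cod X g = Dom X h \<longrightarrow>
        Cmp X h (Cmp X g f) = Cmp X (Cmp X h g) f)"

text \<open>Functors: object and morphism maps (only their values on the carriers matter).\<close>
record ('oa,'ma,'ob,'mb) funct =
  fobj :: "'oa \<Rightarrow> 'ob"
  farr :: "'ma \<Rightarrow> 'mb"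

definition is_functor ::
  "('oa,'ma) category \<Rightarrow> ('ob,'mb) category \<Rightarrow> ('oa,'ma,'ob,'mb,'z) funct_scheme \<Rightarrow> bool" where
  "is_functor X Y F \<longleftrightarrow>
     (\<forall>a\<in>Obj X. fobj F a \<in> Obj Y) \<and>
     (\<forall>f\<in>Arr X. farr F f \<in> Arr Y \<and> Dom Y (farr F f) = fobj F (Dom X f)
                                    \<and> Cod Y (farr F f) = fobj F (Cod X f)) \<and>
     (\<forall>a\<in>Obj X. farr F (Idt X a) = Idt Y (fobj F a)) \<and>
     (\<forall>f\<in>Arr X. \<forall>g\<in>Arr X. Cod X f = Dom X g \<longrightarrow>
        farr F (Cmp X g f) = Cmp Y (farr F g) (farr F f))"

definition functor_eq ::
  "('oa,'ma) category \<Rightarrow> ('ob,'mb) category \<Rightarrow> ('oa,'ma,'ob,'mb,'z) funct_scheme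
     \<Rightarrow> ('oa,'ma,'ob,'mb,'w) funct_scheme \<Rightarrow> bool" where
  "functor_eq X Y F G \<longleftrightarrow>
     (\<forall>a\<in>Obj X. fobj F a = fobj G a) \<and> (\<forall>f\<in>Arr X. farr F f = farr G f)"

definition functor_comp ::
  "('ob,'mb,'oc,'mc,'z) funct_scheme \<Rightarrow> ('oa,'ma,'ob,'mb,'w) funct_scheme
     \<Rightarrow> ('oa,'ma,'oc,'mc) funct" where
  "functor_comp G F = \<lparr>fobj = fobj G \<circ> fobj F, farr = farr G \<circ> farr F\<rparr>"

text \<open>Lenses: a get functor together with the put (lifting) operation
  put A b = phi_{F,A}(b).\<close>
record ('oa,'ma,'ob,'mb) lens = "('oa,'ma,'ob,'mb) funct" +
  put :: "'oa \<Rightarrow> 'mb \<Rightarrow> 'ma"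

definition is_lens ::
  "('oa,'ma) category \<Rightarrow> ('ob,'mb) category \<Rightarrow> ('oa,'ma,'ob,'mb) lens \<Rightarrow> bool" where
  "is_lens X Y L \<longleftrightarrow>
     is_functor X Y L \<and>
     (\<forall>a\<in>Obj X. \<forall>b\<in>Arr Y. Dom Y b = fobj L a \<longrightarrow>
        put L a b \<in> Arr X \<and> Dom X (put L a b) = a \<and> farr L (put L a b) = b) \<and>
     (\<forall>a\<in>Obj X. put L a (Idt Y (fobj L a)) = Idt X a) \<and>
     (\<forall>a\<in>Obj X. \<forall>b\<in>Arr Y. \<forall>b'\<in>Arr Y.
        Dom Y b = fobj L a \<longrightarrow> Dom Y b' = fobj L (Cod X (put L a b)) \<longrightarrow>
        put L a (Cmp Y b' b) = Cmp X (put L (Cod X (put L a b)) b') (put L a b))"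

definition lens_eq ::
  "('oa,'ma) category \<Rightarrow> ('ob,'mb) category \<Rightarrow> ('oa,'ma,'ob,'mb) lens
     \<Rightarrow> ('oa,'ma,'ob,'mb) lens \<Rightarrow> bool" where
  "lens_eq X Y L M \<longleftrightarrow>
     functor_eq X Y L M \<and>
     (\<forall>a\<in>Obj X. \<forall>b\<in>Arr Y. Dom Y b = fobj L a \<longrightarrow> put L a b = put M a b)"

definition lens_comp ::
  "('ob,'mb,'oc,'mc) lens \<Rightarrow> ('oa,'ma,'ob,'mb) lens \<Rightarrow> ('oa,'ma,'oc,'mc) lens" where
  "lens_comp G F = \<lparr>fobj = fobj G \<circ> fobj F, farr = farr G \<circ> farr F,
                    put = (\<lambda>a c. put F a (put G (fobj F a) c))\<rparr>"

definition U :: "('oa,'ma,'ob,'mb) lens \<Rightarrow> ('oa,'ma,'ob,'mb) funct" where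
  "U L = \<lparr>fobj = fobj L, farr = farr L\<rparr>"

text \<open>E is a coequaliser of F1, F2 in Cat, with respect to test categories whose
  objects and morphisms live in the types 'do and 'dm.\<close>
definition cat_coequaliser ::
  "'do itself \<Rightarrow> 'dm itself \<Rightarrow> ('oa,'ma) category \<Rightarrow> ('ob,'mb) category \<Rightarrow> ('oc,'mc) category
   \<Rightarrow> ('oa,'ma,'ob,'mb) funct \<Rightarrow> ('oa,'ma,'ob,'mb) funct \<Rightarrow> ('ob,'mb,'oc,'mc) funct \<Rightarrow> bool" where
  "cat_coequaliser _ _ X Y Z F1 F2 E \<longleftrightarrow>
     is_functor Y Z E \<and> functor_eq X Z (functor_comp E F1) (functor_comp E F2) \<and>
     (\<forall>(D :: ('do,'dm) category) (G :: ('ob,'mb,'do,'dm) funct).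
        is_category D \<and> is_functor Y D G \<and> functor_eq X D (functor_comp G F1) (functor_comp G F2) \<longrightarrow>
        (\<exists>K :: ('oc,'mc,'do,'dm) funct. is_functor Z D K \<and> functor_eq Y D (functor_comp K E) G \<and>
           (\<forall>K' :: ('oc,'mc,'do,'dm) funct. is_functor Z D K' \<and> functor_eq Y D (functor_comp K' E) G
              \<longrightarrow> functor_eq Z D K' K)))"

definition lens_coequaliser ::
  "'do itself \<Rightarrow> 'dm itself \<Rightarrow> ('oa,'ma) category \<Rightarrow> ('ob,'mb) category \<Rightarrow> ('oc,'mc) category
   \<Rightarrow> ('oa,'ma,'ob,'mb) lens \<Rightarrow> ('oa,'ma,'ob,'mb) lens \<Rightarrow> ('ob,'mb,'oc,'mc) lens \<Rightarrow> bool" where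
  "lens_coequaliser _ _ X Y Z F1 F2 E \<longleftrightarrow>
     is_lens Y Z E \<and> lens_eq X Z (lens_comp E F1) (lens_comp E F2) \<and>
     (\<forall>(D :: ('do,'dm) category) (G :: ('ob,'mb,'do,'dm) lens).
        is_category D \<and> is_lens Y D G \<and> lens_eq X D (lens_comp G F1) (lens_comp G F2) \<longrightarrow>
        (\<exists>K :: ('oc,'mc,'do,'dm) lens. is_lens Z D K \<and> lens_eq Y D (lens_comp K E) G \<and>
           (\<forall>K' :: ('oc,'mc,'do,'dm) lens. is_lens Z D K' \<and> lens_eq Y D (lens_comp K' E) G
              \<longrightarrow> lens_eq Z D K' K)))"

end

theory Submission
  imports Defs
begin

text \<open>If E is a coequaliser in Lens, a lens G with G F1 = G F2 factors as G = K E, and applying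
  E to phi_G(b, d) = phi_E(b, phi_K(E b, d)) gives E phi_G(b, d) = phi_K(E b, d); substituting this back
  yields the condition. Conversely, the get functor of G factors uniquely through UE as some K in
  Cat, and the puts of K are forced to be phi_K(E b, d) = E phi_G(b, d). These are well defined
  because UE, being a coequaliser in Cat, is surjective on objects and identifies only objects
  that no property invariant under F1 a ~ F2 a can separate: test the coequaliser against the
  indiscrete category on two objects. The condition then says exactly that K E = G as lenses.\<close>

lemma lens_is_functor: "is_lens X Y L \<Longrightarrow> is_functor X Y L"
  by (simp add: is_lens_def)

lemma is_functor_U [simp]: "is_functor X Y (U L) \<longleftrightarrow> is_functor X Y L"
  by (simp add: is_functor_def U_def)

lemma category_cod: "is_category X \<Longrightarrow> f \<in> Arr X \<Longrightarrow> Cod X f \<in> Obj X"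
  by (simp add: is_category_def)

lemma category_idt:
  "is_category X \<Longrightarrow> a \<in> Obj X \<Longrightarrow> Idt X a \<in> Arr X \<and> Dom X (Idt X a) = a"
  by (simp add: is_category_def)

lemma category_cmp:
  "is_category X \<Longrightarrow> f \<in> Arr X \<Longrightarrow> g \<in> Arr X \<Longrightarrow> Cod X f = Dom X g \<Longrightarrow>
   Cmp X g f \<in> Arr X \<and> Dom X (Cmp X g f) = Dom X f"
  by (simp add: is_category_def)

lemma functor_obj: "is_functor X Y F \<Longrightarrow> a \<in> Obj X \<Longrightarrow> fobj F a \<in> Obj Y"
  by (simp add: is_functor_def)

lemma functor_arr:
  "is_functor X Y F \<Longrightarrow> f \<in> Arr X \<Longrightarrow>
   farr F f \<in> Arr Y \<and> Dom Y (farr F f) = fobj F (Dom X f) \<and> Cod Y (farr F f) = fobj F (Cod X f)"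
  by (simp add: is_functor_def)

lemma functor_id: "is_functor X Y F \<Longrightarrow> a \<in> Obj X \<Longrightarrow> farr F (Idt X a) = Idt Y (fobj F a)"
  by (simp add: is_functor_def)

lemma functor_cmp:
  "is_functor X Y F \<Longrightarrow> f \<in> Arr X \<Longrightarrow> g \<in> Arr X \<Longrightarrow> Cod X f = Dom X g \<Longrightarrow>
   farr F (Cmp X g f) = Cmp Y (farr F g) (farr F f)"
  by (simp add: is_functor_def)

lemma lens_put:
  "is_lens X Y L \<Longrightarrow> a \<in> Obj X \<Longrightarrow> b \<in> Arr Y \<Longrightarrow> Dom Y b = fobj L a \<Longrightarrow>
   put L a b \<in> Arr X \<and> Dom X (put L a b) = a \<and> farr L (put L a b) = b"
  by (simp add: is_lens_def)

lemma lens_put_id: "is_lens X Y L \<Longrightarrow> a \<in> Obj X \<Longrightarrow> put L a (Idt Y (fobj L a)) = Idt X a"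
  by (simp add: is_lens_def)

lemma lens_put_cmp:
  "is_lens X Y L \<Longrightarrow> a \<in> Obj X \<Longrightarrow> b \<in> Arr Y \<Longrightarrow> b' \<in> Arr Y \<Longrightarrow>
   Dom Y b = fobj L a \<Longrightarrow> Dom Y b' = fobj L (Cod X (put L a b)) \<Longrightarrow>
   put L a (Cmp Y b' b) = Cmp X (put L (Cod X (put L a b)) b') (put L a b)"
  by (simp add: is_lens_def)

lemma cat_coequaliserE:
  fixes D :: "('do,'dm) category" and G :: "('ob,'mb,'do,'dm) funct"
  assumes "cat_coequaliser TYPE('do) TYPE('dm) X Y Z F1 F2 E"
    and "is_category D" and "is_functor Y D G"
    and "functor_eq X D (functor_comp G F1) (functor_comp G F2)"
  obtains K :: "('oc,'mc,'do,'dm) funct"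
  where "is_functor Z D K" and "functor_eq Y D (functor_comp K E) G"
    and "\<And>K' :: ('oc,'mc,'do,'dm) funct.
      is_functor Z D K' \<Longrightarrow> functor_eq Y D (functor_comp K' E) G \<Longrightarrow> functor_eq Z D K' K"
  using assms unfolding cat_coequaliser_def by blast

text \<open>The indiscrete category on the objects True and False, encoded in the types 'o set and
  'm list set because the theorem assumes the Cat coequaliser property only for test categories
  on such types; bool_arr p q is the unique arrow from p to q.\<close>

definition bool_obj :: "bool \<Rightarrow> 'o set" where
  "bool_obj p = (if p then UNIV else {})"

definition bool_arr :: "bool \<Rightarrow> bool \<Rightarrow> 'm list set" where
  "bool_arr p q = {xs. xs = [] \<and> p \<or> xs = [undefined] \<and> q}"

lemma bool_obj_eq_iff [simp]: "bool_obj p = bool_obj q \<longleftrightarrow> p = q"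
  by (simp add: bool_obj_def)

lemma bool_obj_eq_UNIV_iff [simp]: "bool_obj p = UNIV \<longleftrightarrow> p"
  by (simp add: bool_obj_def)

lemma bool_arr_eq_iff [simp]: "bool_arr p q = bool_arr p' q' \<longleftrightarrow> p = p' \<and> q = q'"
  by (auto simp: bool_arr_def set_eq_iff)

lemma mem_bool_arr [simp]: "[] \<in> bool_arr p q \<longleftrightarrow> p" "[undefined] \<in> bool_arr p q \<longleftrightarrow> q"
  by (simp_all add: bool_arr_def)

definition indiscrete_bool :: "('o set, 'm list set) category" where
  "indiscrete_bool =
     \<lparr>Obj = range bool_obj, Arr = {bool_arr p q | p q. True},
      Dom = (\<lambda>m. bool_obj ([] \<in> m)), Cod = (\<lambda>m. bool_obj ([undefined] \<in> m)),
      Idt = (\<lambda>x. bool_arr (x = UNIV) (x = UNIV)),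
      Cmp = (\<lambda>g f. bool_arr ([] \<in> f) ([undefined] \<in> g))\<rparr>"

lemma is_category_indiscrete_bool: "is_category indiscrete_bool"
  unfolding is_category_def indiscrete_bool_def by auto

definition indicator_functor ::
  "('o,'m) category \<Rightarrow> ('o \<Rightarrow> bool) \<Rightarrow> ('o,'m,'p set,'n list set) funct" where
  "indicator_functor X P =
     \<lparr>fobj = (\<lambda>x. bool_obj (P x)), farr = (\<lambda>f. bool_arr (P (Dom X f)) (P (Cod X f)))\<rparr>"

lemma is_functor_indicator_functor:
  "is_category X \<Longrightarrow> is_functor X indiscrete_bool (indicator_functor X P)"
  unfolding is_functor_def indicator_functor_def indiscrete_bool_def is_category_def by auto

lemma cat_coequaliser_fibre_invariant:
  fixes F1 F2 :: "('oa,'ma,'ob,'mb) funct" and E :: "('ob,'mb,'oc,'mc) funct"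
  assumes coeq: "cat_coequaliser TYPE('o set) TYPE('m list set) A B C F1 F2 E"
    and "is_category A" and "is_category B" and "is_functor A B F1" and "is_functor A B F2"
    and respects: "\<And>a. a \<in> Obj A \<Longrightarrow> P (fobj F1 a) \<longleftrightarrow> P (fobj F2 a)"
    and "b \<in> Obj B" and "b' \<in> Obj B" and "fobj E b = fobj E b'" and "P b"
  shows "P b'"
proof -
  let ?G = "indicator_functor B P :: ('ob,'mb,'o set,'m list set) funct"
  have "functor_eq A indiscrete_bool (functor_comp ?G F1) (functor_comp ?G F2)"
    using assms(2,4,5) respects
    unfolding functor_eq_def functor_comp_def indicator_functor_def is_functor_def is_category_def
    by auto
  with coeq is_category_indiscrete_bool is_functor_indicator_functor[OF \<open>is_category B\<close>]
  obtain K :: "('oc,'mc,'o set,'m list set) funct"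
    where "functor_eq B indiscrete_bool (functor_comp K E) ?G"
    by (rule cat_coequaliserE)
  then have "fobj K (fobj E x) = bool_obj (P x)" if "x \<in> Obj B" for x
    using that unfolding functor_eq_def functor_comp_def indicator_functor_def by simp
  then show "P b'"
    using assms(7-10) by (metis bool_obj_eq_iff)
qed

lemma cat_coequaliser_surjective_on_objects:
  fixes E :: "('ob,'mb,'oc,'mc) funct"
  assumes coeq: "cat_coequaliser TYPE('o set) TYPE('m list set) A B C F1 F2 E"
    and "is_category B" and "is_category C" and "c \<in> Obj C"
  shows "\<exists>b\<in>Obj B. fobj E b = c"
proof -
  let ?G = "indicator_functor B (\<lambda>_. True) :: ('ob,'mb,'o set,'m list set) funct"
  let ?K_all = "indicator_functor C (\<lambda>_. True) :: ('oc,'mc,'o set,'m list set) funct"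
  let ?K_image = "indicator_functor C (\<lambda>c. \<exists>b\<in>Obj B. fobj E b = c)
    :: ('oc,'mc,'o set,'m list set) funct"
  have "is_functor B C E"
    using coeq by (simp add: cat_coequaliser_def)
  have "functor_eq A indiscrete_bool (functor_comp ?G F1) (functor_comp ?G F2)"
    unfolding functor_eq_def functor_comp_def indicator_functor_def by simp
  with coeq is_category_indiscrete_bool is_functor_indicator_functor[OF \<open>is_category B\<close>]
  obtain K :: "('oc,'mc,'o set,'m list set) funct"
    where unique: "\<And>K' :: ('oc,'mc,'o set,'m list set) funct. is_functor C indiscrete_bool K' \<Longrightarrow>
      functor_eq B indiscrete_bool (functor_comp K' E) ?G \<Longrightarrow> functor_eq C indiscrete_bool K' K"
    by (rule cat_coequaliserE) blast
  have "functor_eq B indiscrete_bool (functor_comp ?K_all E) ?G"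
    unfolding functor_eq_def functor_comp_def indicator_functor_def by simp
  moreover have "functor_eq B indiscrete_bool (functor_comp ?K_image E) ?G"
    using functor_arr[OF \<open>is_functor B C E\<close>] \<open>is_category B\<close>
    unfolding functor_eq_def functor_comp_def indicator_functor_def is_category_def
    by auto
  ultimately have "functor_eq C indiscrete_bool ?K_all K" "functor_eq C indiscrete_bool ?K_image K"
    using unique is_functor_indicator_functor[OF \<open>is_category C\<close>] by blast+
  then have "fobj ?K_all c = fobj ?K_image c"
    using \<open>c \<in> Obj C\<close> unfolding functor_eq_def by simp
  then show ?thesis
    unfolding indicator_functor_def by simp
qed

lemma fobj_U [simp]: "fobj (U L) = fobj L" and farr_U [simp]: "farr (U L) = farr L"
  by (simp_all add: U_def)

lemma U_lens_comp: "U (lens_comp G F) = functor_comp (U G) (U F)"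
  by (simp add: U_def lens_comp_def functor_comp_def)

lemma lens_eq_imp_functor_eq: "lens_eq X Y L M \<Longrightarrow> functor_eq X Y (U L) (U M)"
  by (simp add: lens_eq_def functor_eq_def)

definition puts_factor_through ::
  "('ob,'mb) category \<Rightarrow> ('od,'md) category \<Rightarrow> ('ob,'mb,'od,'md) lens \<Rightarrow> ('ob,'mb,'oc,'mc) lens
     \<Rightarrow> bool" where
  "puts_factor_through B D G E \<longleftrightarrow>
     (\<forall>b\<in>Obj B. \<forall>d\<in>Arr D. Dom D d = fobj G b \<longrightarrow> put G b d = put E b (farr E (put G b d)))"

lemma
  assumes E: "is_lens B C E" and K: "is_lens C D K" and KE: "lens_eq B D (lens_comp K E) G"
    and b: "b \<in> Obj B" and d: "d \<in> Arr D" "Dom D d = fobj G b"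
  shows put_lens_comp_eq: "put E b (put K (fobj E b) d) = put G b d"
    and farr_put_lens_comp_eq: "farr E (put G b d) = put K (fobj E b) d"
proof -
  have "fobj K (fobj E b) = fobj G b"
    using KE b by (simp add: lens_eq_def functor_eq_def lens_comp_def)
  with KE b d show put_G: "put E b (put K (fobj E b) d) = put G b d"
    by (simp add: lens_eq_def lens_comp_def)
  have "fobj E b \<in> Obj C"
    using functor_obj[OF lens_is_functor[OF E] b] .
  with K d \<open>fobj K (fobj E b) = fobj G b\<close>
  have "put K (fobj E b) d \<in> Arr C" "Dom C (put K (fobj E b) d) = fobj E b"
    using lens_put by fastforce+
  then show "farr E (put G b d) = put K (fobj E b) d"
    using lens_put[OF E b] put_G by metis
qed

lemma puts_factor_through_lens_comp:
  assumes "is_lens B C E" and "is_lens C D K" and "lens_eq B D (lens_comp K E) G"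
  shows "puts_factor_through B D G E"
  using put_lens_comp_eq[OF assms] farr_put_lens_comp_eq[OF assms]
  unfolding puts_factor_through_def by simp

lemma puts_factor_through_if_lens_coequaliser:
  fixes C :: "('oc,'mc) category" and D :: "('od,'md) category"
  assumes "lens_coequaliser TYPE('od) TYPE('md) A B C F1 F2 E"
    and "is_category D" and "is_lens B D G" and "lens_eq A D (lens_comp G F1) (lens_comp G F2)"
  shows "puts_factor_through B D G E"
proof -
  from assms obtain K :: "('oc,'mc,'od,'md) lens"
    where "is_lens C D K" and "lens_eq B D (lens_comp K E) G"
    unfolding lens_coequaliser_def by blast
  moreover have "is_lens B C E"
    using assms(1) by (simp add: lens_coequaliser_def)
  ultimately show ?thesis
    using puts_factor_through_lens_comp by blast
qed

definition preimage_obj :: "('ob,'mb) category \<Rightarrow> ('ob,'mb,'oc,'mc) lens \<Rightarrow> 'oc \<Rightarrow> 'ob" where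
  "preimage_obj B E c = (SOME b. b \<in> Obj B \<and> fobj E b = c)"

definition induced_lens ::
  "('ob,'mb) category \<Rightarrow> ('ob,'mb,'oc,'mc) lens \<Rightarrow> ('ob,'mb,'od,'md) lens \<Rightarrow> ('oc,'mc,'od,'md) funct
     \<Rightarrow> ('oc,'mc,'od,'md) lens" where
  "induced_lens B E G K =
     \<lparr>fobj = fobj K, farr = farr K, put = (\<lambda>c d. farr E (put G (preimage_obj B E c) d))\<rparr>"

lemma fobj_induced_lens [simp]: "fobj (induced_lens B E G K) = fobj K"
  and farr_induced_lens [simp]: "farr (induced_lens B E G K) = farr K"
  by (simp_all add: induced_lens_def)

locale lens_fork =
  fixes A :: "('oa,'ma) category" and B :: "('ob,'mb) category" and C :: "('oc,'mc) category"
    and F1 F2 :: "('oa,'ma,'ob,'mb) lens" and E :: "('ob,'mb,'oc,'mc) lens"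
  assumes cat_A: "is_category A" and cat_B: "is_category B" and cat_C: "is_category C"
    and lens_F1: "is_lens A B F1" and lens_F2: "is_lens A B F2" and lens_E: "is_lens B C E"
    and fork: "lens_eq A C (lens_comp E F1) (lens_comp E F2)"
    and get_coequaliser: "cat_coequaliser TYPE('ob set) TYPE('mb list set) A B C (U F1) (U F2) (U E)"
begin

lemma functor_F1: "is_functor A B F1" and functor_F2: "is_functor A B F2"
  and functor_E: "is_functor B C E"
  using lens_F1 lens_F2 lens_E by (simp_all add: lens_is_functor)

lemma preimage_obj:
  assumes "c \<in> Obj C"
  shows "preimage_obj B E c \<in> Obj B" and "fobj E (preimage_obj B E c) = c"
proof -
  have "\<exists>b\<in>Obj B. fobj E b = c"
    using cat_coequaliser_surjective_on_objects[OF get_coequaliser cat_B cat_C assms] by simp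
  then show "preimage_obj B E c \<in> Obj B" "fobj E (preimage_obj B E c) = c"
    unfolding preimage_obj_def by (metis (mono_tags, lifting) someI_ex)+
qed

lemma fibre_invariant:
  assumes "\<And>a. a \<in> Obj A \<Longrightarrow> P (fobj F1 a) \<longleftrightarrow> P (fobj F2 a)"
    and "x \<in> Obj B" and "y \<in> Obj B" and "fobj E x = fobj E y" and "P x"
  shows "P y"
  using cat_coequaliser_fibre_invariant[OF get_coequaliser cat_A cat_B,
      where P = P and b = x and b' = y] assms functor_F1 functor_F2 by simp

context
  fixes D :: "('od,'md) category" and G :: "('ob,'mb,'od,'md) lens"
  assumes cat_D: "is_category D" and lens_G: "is_lens B D G"
    and fork_G: "lens_eq A D (lens_comp G F1) (lens_comp G F2)"
begin

lemma functor_G: "is_functor B D G"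
  using lens_G by (rule lens_is_functor)

lemma put_image_fibre_invariant:
  assumes x: "x \<in> Obj B" and y: "y \<in> Obj B" and "fobj E x = fobj E y"
    and d: "d \<in> Arr D" "Dom D d = fobj G x"
  shows "farr E (put G y d) = farr E (put G x d)"
proof -
  let ?P = "\<lambda>z. fobj G z = fobj G x \<and> farr E (put G z d) = farr E (put G x d)"
  have "?P (fobj F1 a) \<longleftrightarrow> ?P (fobj F2 a)" if a: "a \<in> Obj A" for a
  proof -
    let ?b1 = "fobj F1 a" and ?b2 = "fobj F2 a"
    have same_obj: "fobj G ?b1 = fobj G ?b2"
      using fork_G a by (simp add: lens_eq_def functor_eq_def lens_comp_def)
    have "farr E (put G ?b1 d) = farr E (put G ?b2 d)" if "fobj G ?b1 = fobj G x"
    proof -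
      have d1: "Dom D d = fobj G ?b1" and d2: "Dom D d = fobj G ?b2"
        using d that same_obj by simp_all
      have b1: "?b1 \<in> Obj B" and b2: "?b2 \<in> Obj B"
        using functor_obj[OF functor_F1 a] functor_obj[OF functor_F2 a] .
      have "put F1 a (put G ?b1 d) = put F2 a (put G ?b2 d)"
        using fork_G a d(1) d1 by (simp add: lens_eq_def lens_comp_def)
      moreover have "put G ?b1 d \<in> Arr B" "Dom B (put G ?b1 d) = ?b1"
        and "put G ?b2 d \<in> Arr B" "Dom B (put G ?b2 d) = ?b2"
        using lens_put[OF lens_G b1 d(1) d1] lens_put[OF lens_G b2 d(1) d2] by simp_all
      then have "put F1 a (put G ?b1 d) \<in> Arr A"
        and "farr F1 (put F1 a (put G ?b1 d)) = put G ?b1 d"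
        and "farr F2 (put F2 a (put G ?b2 d)) = put G ?b2 d"
        using lens_put[OF lens_F1 a] lens_put[OF lens_F2 a] by simp_all
      moreover have "farr E (farr F1 f) = farr E (farr F2 f)" if "f \<in> Arr A" for f
        using fork that by (simp add: lens_eq_def functor_eq_def lens_comp_def)
      ultimately show ?thesis
        by metis
    qed
    with same_obj show ?thesis
      by auto
  qed
  then have "?P y"
    using fibre_invariant[of ?P x y] assms by simp
  then show ?thesis
    by simp
qed

context
  fixes K :: "('oc,'mc,'od,'md) funct"
  assumes functor_K: "is_functor C D K" and K_E: "functor_eq B D (functor_comp K (U E)) (U G)"
begin

lemma K_E_obj: "b \<in> Obj B \<Longrightarrow> fobj K (fobj E b) = fobj G b"
  and K_E_arr: "f \<in> Arr B \<Longrightarrow> farr K (farr E f) = farr G f"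
  using K_E by (simp_all add: functor_eq_def functor_comp_def)

lemma put_induced_lens:
  assumes b: "b \<in> Obj B" and d: "d \<in> Arr D" "Dom D d = fobj G b"
  shows "put (induced_lens B E G K) (fobj E b) d = farr E (put G b d)"
proof -
  have "fobj E b \<in> Obj C"
    using functor_obj[OF functor_E b] .
  then have "preimage_obj B E (fobj E b) \<in> Obj B" "fobj E b = fobj E (preimage_obj B E (fobj E b))"
    using preimage_obj by simp_all
  then show ?thesis
    using put_image_fibre_invariant[OF b _ _ d] by (simp add: induced_lens_def)
qed

lemma obj_C_imageE:
  assumes "c \<in> Obj C"
  obtains b where "b \<in> Obj B" and "c = fobj E b"
  using preimage_obj[OF assms] by metis

lemma is_lens_induced_lens: "is_lens C D (induced_lens B E G K)" (is "is_lens C D ?K")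
  unfolding is_lens_def
proof (intro conjI ballI impI)
  show "is_functor C D ?K"
    using functor_K by (simp add: is_functor_def)
next
  fix c d assume "c \<in> Obj C" and d: "d \<in> Arr D" "Dom D d = fobj ?K c"
  then obtain b where b: "b \<in> Obj B" "c = fobj E b" and dG: "Dom D d = fobj G b"
    using K_E_obj by (metis obj_C_imageE fobj_induced_lens)
  have "put G b d \<in> Arr B" "Dom B (put G b d) = b" "farr G (put G b d) = d"
    using lens_put[OF lens_G b(1) d(1) dG] by simp_all
  then show "put ?K c d \<in> Arr C" "Dom C (put ?K c d) = c" "farr ?K (put ?K c d) = d"
    using put_induced_lens[OF b(1) d(1) dG] functor_arr[OF functor_E] K_E_arr b(2) by simp_all
next
  fix c assume "c \<in> Obj C"
  then obtain b where b: "b \<in> Obj B" "c = fobj E b"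
    by (rule obj_C_imageE)
  have "fobj G b \<in> Obj D"
    using functor_obj[OF functor_G b(1)] .
  then have "put ?K c (Idt D (fobj ?K c)) = farr E (put G b (Idt D (fobj G b)))"
    using put_induced_lens[OF b(1)] category_idt[OF cat_D] K_E_obj[OF b(1)] b(2) by simp
  also have "\<dots> = Idt C c"
    using lens_put_id[OF lens_G b(1)] functor_id[OF functor_E b(1)] b(2) by simp
  finally show "put ?K c (Idt D (fobj ?K c)) = Idt C c" .
next
  fix c d d' assume "c \<in> Obj C" and d: "d \<in> Arr D" "d' \<in> Arr D" "Dom D d = fobj ?K c"
    and d': "Dom D d' = fobj ?K (Cod C (put ?K c d))"
  then obtain b where b: "b \<in> Obj B" "c = fobj E b" and dG: "Dom D d = fobj G b"
    using K_E_obj by (metis obj_C_imageE fobj_induced_lens)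
  define p where "p = put G b d"
  have p: "p \<in> Arr B" "Dom B p = b" "farr G p = d"
    using lens_put[OF lens_G b(1) d(1) dG] by (simp_all add: p_def)
  then have "Cod D d = fobj G (Cod B p)"
    using functor_arr[OF functor_G] by metis
  have b': "Cod B p \<in> Obj B"
    using category_cod[OF cat_B p(1)] .
  have put_c: "put ?K c d = farr E p"
    using put_induced_lens[OF b(1) d(1) dG] b(2) by (simp add: p_def)
  then have cod: "Cod C (put ?K c d) = fobj E (Cod B p)"
    using functor_arr[OF functor_E p(1)] by simp
  then have dG': "Dom D d' = fobj G (Cod B p)"
    using d' K_E_obj[OF b'] by simp
  have "put ?K c (Cmp D d' d) = farr E (Cmp B (put G (Cod B p) d') p)"
    using put_induced_lens[OF b(1)] category_cmp[OF cat_D d(1,2)] \<open>Cod D d = fobj G (Cod B p)\<close>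
      dG dG' lens_put_cmp[OF lens_G b(1) d(1,2) dG] b(2)
    by (simp add: p_def)
  also have "\<dots> = Cmp C (farr E (put G (Cod B p) d')) (farr E p)"
    using functor_cmp[OF functor_E p(1)] lens_put[OF lens_G b' d(2) dG'] by simp
  also have "\<dots> = Cmp C (put ?K (Cod C (put ?K c d)) d') (put ?K c d)"
    using put_induced_lens[OF b' d(2) dG'] cod put_c by simp
  finally show "put ?K c (Cmp D d' d) = Cmp C (put ?K (Cod C (put ?K c d)) d') (put ?K c d)" .
qed

lemma lens_comp_induced_lens:
  assumes "puts_factor_through B D G E"
  shows "lens_eq B D (lens_comp (induced_lens B E G K) E) G"
  unfolding lens_eq_def functor_eq_def
proof (intro conjI ballI impI)
  fix b d assume b: "b \<in> Obj B" and d: "d \<in> Arr D"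
    and "Dom D d = fobj (lens_comp (induced_lens B E G K) E) b"
  then have dG: "Dom D d = fobj G b"
    using K_E_obj by (simp add: lens_comp_def)
  have "put (lens_comp (induced_lens B E G K) E) b d = put E b (farr E (put G b d))"
    using put_induced_lens[OF b d dG] by (simp add: lens_comp_def)
  also have "\<dots> = put G b d"
    using assms b d dG by (simp add: puts_factor_through_def)
  finally show "put (lens_comp (induced_lens B E G K) E) b d = put G b d" .
qed (simp_all add: lens_comp_def K_E_obj K_E_arr)

lemma induced_lens_unique:
  assumes unique: "\<And>K' :: ('oc,'mc,'od,'md) funct. is_functor C D K' \<Longrightarrow>
      functor_eq B D (functor_comp K' (U E)) (U G) \<Longrightarrow> functor_eq C D K' K"
    and K': "is_lens C D K'" and K'_E: "lens_eq B D (lens_comp K' E) G"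
  shows "lens_eq C D K' (induced_lens B E G K)"
proof -
  have "functor_eq C D (U K') K"
    using unique lens_is_functor[OF K'] lens_eq_imp_functor_eq[OF K'_E]
    by (simp add: U_lens_comp)
  moreover have "put K' c d = put (induced_lens B E G K) c d"
    if "c \<in> Obj C" and d: "d \<in> Arr D" "Dom D d = fobj K' c" for c d
  proof -
    obtain b where b: "b \<in> Obj B" "c = fobj E b"
      using obj_C_imageE[OF \<open>c \<in> Obj C\<close>] .
    have "fobj K' c = fobj G b"
      using K'_E b by (simp add: lens_eq_def functor_eq_def lens_comp_def)
    with d have dG: "Dom D d = fobj G b"
      by simp
    show ?thesis
      using farr_put_lens_comp_eq[OF lens_E K' K'_E b(1) d(1) dG]
        put_induced_lens[OF b(1) d(1) dG] b(2)
      by simp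
  qed
  ultimately show ?thesis
    by (simp add: lens_eq_def functor_eq_def)
qed

end

end

lemma lens_coequaliser_if_puts_factor_through:
  assumes coeq: "cat_coequaliser TYPE('od) TYPE('md) A B C (U F1) (U F2) (U E)"
    and puts: "\<And>(D :: ('od,'md) category) G. is_category D \<Longrightarrow> is_lens B D G \<Longrightarrow>
      lens_eq A D (lens_comp G F1) (lens_comp G F2) \<Longrightarrow> puts_factor_through B D G E"
  shows "lens_coequaliser TYPE('od) TYPE('md) A B C F1 F2 E"
  unfolding lens_coequaliser_def
proof (intro conjI allI impI lens_E fork)
  fix D :: "('od,'md) category" and G :: "('ob,'mb,'od,'md) lens"
  assume "is_category D \<and> is_lens B D G \<and> lens_eq A D (lens_comp G F1) (lens_comp G F2)"
  then have D: "is_category D" and G: "is_lens B D G"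
    and G_fork: "lens_eq A D (lens_comp G F1) (lens_comp G F2)"
    by simp_all
  obtain K :: "('oc,'mc,'od,'md) funct"
    where "is_functor C D K" and "functor_eq B D (functor_comp K (U E)) (U G)"
      and "\<And>K' :: ('oc,'mc,'od,'md) funct. is_functor C D K' \<Longrightarrow>
        functor_eq B D (functor_comp K' (U E)) (U G) \<Longrightarrow> functor_eq C D K' K"
    using coeq D is_functor_U[THEN iffD2, OF lens_is_functor[OF G]]
      lens_eq_imp_functor_eq[OF G_fork, unfolded U_lens_comp]
    by (rule cat_coequaliserE) blast
  with D G G_fork puts
  show "\<exists>K :: ('oc,'mc,'od,'md) lens. is_lens C D K \<and> lens_eq B D (lens_comp K E) G \<and>
     (\<forall>K' :: ('oc,'mc,'od,'md) lens. is_lens C D K' \<and> lens_eq B D (lens_comp K' E) G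
        \<longrightarrow> lens_eq C D K' K)"
    by (blast intro: is_lens_induced_lens lens_comp_induced_lens induced_lens_unique)
qed

end

theorem theorem4p5:
  fixes A :: "('oa,'ma) category" and B :: "('ob,'mb) category" and C :: "('oc,'mc) category"
    and F1 F2 :: "('oa,'ma,'ob,'mb) lens" and E :: "('ob,'mb,'oc,'mc) lens"
  assumes "is_category A" and "is_category B" and "is_category C"
    and "is_lens A B F1" and "is_lens A B F2" and "is_lens B C E"
    and "lens_eq A C (lens_comp E F1) (lens_comp E F2)"
    and "cat_coequaliser TYPE('do) TYPE('dm) A B C (U F1) (U F2) (U E)"
    and "cat_coequaliser TYPE('ob set) TYPE('mb list set) A B C (U F1) (U F2) (U E)"
  shows "lens_coequaliser TYPE('do) TYPE('dm) A B C F1 F2 E \<longleftrightarrow>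
    (\<forall>(D :: ('do,'dm) category) (G :: ('ob,'mb,'do,'dm) lens).
       is_category D \<and> is_lens B D G \<and> lens_eq A D (lens_comp G F1) (lens_comp G F2) \<longrightarrow>
       (\<forall>b\<in>Obj B. \<forall>d\<in>Arr D. Dom D d = fobj G b \<longrightarrow>
          put G b d = put E b (farr E (put G b d))))"
proof -
  interpret lens_fork A B C F1 F2 E
    using assms(1-7,9) by unfold_locales
  show ?thesis
    using puts_factor_through_if_lens_coequaliser lens_coequaliser_if_puts_factor_through[OF assms(8)]
    unfolding puts_factor_through_def by blast
qed

end
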